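(* Let $(X,\delta,c)$ be an accepting automaton over $\Sigma$ and let $\mu\mathrm{PL}(\delta,c)$ be as in the context. Then $\mu\mathrm{PL}(\delta,c)$ is isomorphic to the smallest preformation of languages containing $\{L(x,c)\mid x\in X\}$, where $L(x,c)=\{u\in\Sigma^\ast\mid\delta(x)(u)\in c\}$; that is, the set $\{L(\mathcal{U})\mid\mathcal{U}\in P(\Sigma^\ast/{\approx})\}$ is the smallest preformation of languages containing all $L(x,c)$, $x\in X$.
   Context: $\Sigma$ is a finite alphabet, $\Sigma^\ast$ the free monoid with empty word $\epsilon$, $u^r$ the reversal of $u$. An accepting automaton is $(X,\delta,c)$ with $\delta:X\to X^\Sigma$ (extended to words by $\delta(x)(\epsilon)=x$, $\delta(x)(wa)=\delta(\delta(x)(w))(a)$) and $c\subseteq X$. Define $\widehat{\delta}(U)(a)=\{x\mid\delta(x)(a)\in U\}$ for $U\subseteq X$, extended to words, so $\widehat{\delta}(U)(w)=\{x\mid\delta(x)(w^r)\in U\}$. Let $\langle c\rangle=\{\widehat{\delta}(c)(w)\mid w\in\Sigma^\ast\}$ and $u\approx v$ iff $\widehat{\delta}(U)(u)=\widehat{\delta}(U)(v)$ for all $U\in\langle c\rangle$. $\mu\mathrm{PL}(\delta,c)$ has state space $P(\Sigma^\ast/{\approx})$, transition $\widehat{\sigma}(\mathcal{U})(u)=\{[w]\mid[wu^r]\in\mathcal{U}\}$ and final states $\{\mathcal{U}\mid[\epsilon]\in\mathcal{U}\}$; $L(\mathcal{U})=\{u\mid[\epsilon]\in\widehat{\sigma}(\mathcal{U})(u)\}$.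 A preformation of languages is a complete atomic Boolean subalgebra of $2^{\Sigma^\ast}$ closed under left derivatives $U\mapsto\{w\mid aw\in U\}$ and right derivatives $U\mapsto\{w\mid wa\in U\}$, $a\in\Sigma$. *)

theory Defs
  imports Main
begin

text \<open>Words over the alphabet 'a are lists; \<open>rev\<close> is reversal.
 An accepting automaton is (delta, c) with delta :: 'x \<Rightarrow> 'a \<Rightarrow> 'x and c :: 'x set.\<close>

fun deltaw :: "('x \<Rightarrow> 'a \<Rightarrow> 'x) \<Rightarrow> 'x \<Rightarrow> 'a list \<Rightarrow> 'x" where
  "deltaw d x [] = x"
| "deltaw d x (a # w) = deltaw d (d x a) w"

definition hatdelta1 :: "('x \<Rightarrow> 'a \<Rightarrow> 'x) \<Rightarrow> 'x set \<Rightarrow> 'a \<Rightarrow> 'x set" where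
  "hatdelta1 d U a = {x. d x a \<in> U}"

fun hatdelta :: "('x \<Rightarrow> 'a \<Rightarrow> 'x) \<Rightarrow> 'x set \<Rightarrow> 'a list \<Rightarrow> 'x set" where
  "hatdelta d U [] = U"
| "hatdelta d U (a # w) = hatdelta d (hatdelta1 d U a) w"

definition gen :: "('x \<Rightarrow> 'a \<Rightarrow> 'x) \<Rightarrow> 'x set \<Rightarrow> 'x set set" where
  "gen d c = {hatdelta d c w | w. True}"

definition approxrel :: "('x \<Rightarrow> 'a \<Rightarrow> 'x) \<Rightarrow> 'x set \<Rightarrow> ('a list \<times> 'a list) set" where
  "approxrel d c = {(u, v). \<forall>U \<in> gen d c. hatdelta d U u = hatdelta d U v}"

definition cls :: "('x \<Rightarrow> 'a \<Rightarrow> 'x) \<Rightarrow> 'x set \<Rightarrow> 'a list \<Rightarrow> 'a list set" where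
  "cls d c w = approxrel d c `` {w}"

text \<open>Sigma*/\<approx>; the state space of muPL is its powerset.\<close>
definition quot :: "('x \<Rightarrow> 'a \<Rightarrow> 'x) \<Rightarrow> 'x set \<Rightarrow> 'a list set set" where
  "quot d c = UNIV // approxrel d c"

definition hatsigma :: "('x \<Rightarrow> 'a \<Rightarrow> 'x) \<Rightarrow> 'x set \<Rightarrow> 'a list set set \<Rightarrow> 'a list \<Rightarrow> 'a list set set" where
  "hatsigma d c UU u = {cls d c w | w. cls d c (w @ rev u) \<in> UU}"

text \<open>Language of a state of muPL: final states are those containing [eps].\<close>
definition Lmu :: "('x \<Rightarrow> 'a \<Rightarrow> 'x) \<Rightarrow> 'x set \<Rightarrow> 'a list set set \<Rightarrow> 'a list set" where
  "Lmu d c UU = {u. cls d c [] \<in> hatsigma d c UU u}"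

definition Lx :: "('x \<Rightarrow> 'a \<Rightarrow> 'x) \<Rightarrow> 'x set \<Rightarrow> 'x \<Rightarrow> 'a list set" where
  "Lx d c x = {u. deltaw d x u \<in> c}"

definition lderiv :: "'a \<Rightarrow> 'a list set \<Rightarrow> 'a list set" where
  "lderiv a U = {w. a # w \<in> U}"

definition rderiv :: "'a \<Rightarrow> 'a list set \<Rightarrow> 'a list set" where
  "rderiv a U = {w. w @ [a] \<in> U}"

definition preformation :: "'a list set set \<Rightarrow> bool" where
  "preformation P \<longleftrightarrow>
     (\<forall>S. S \<subseteq> P \<longrightarrow> \<Union>S \<in> P) \<and>
     (\<forall>S. S \<subseteq> P \<longrightarrow> \<Inter>S \<in> P) \<and>
     (\<forall>A \<in> P. - A \<in> P) \<and>
     (\<forall>A \<in> P. A \<noteq> {} \<longrightarrow>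
        (\<exists>B \<in> P. B \<noteq> {} \<and> B \<subseteq> A \<and> (\<forall>C \<in> P. C \<subseteq> B \<longrightarrow> C = {} \<or> C = B))) \<and>
     (\<forall>a. \<forall>A \<in> P. lderiv a A \<in> P \<and> rderiv a A \<in> P)"

end

theory Submission
  imports Defs
begin

(* Write u ~ v when \<delta>(x)(uw) \<in> c \<longleftrightarrow> \<delta>(x)(vw) \<in> c for all states x and words w.
   Up to reversal of words this is \<approx>, and L(\<U>) is the set of words whose class lies in \<U>,
   so the languages L(\<U>) are exactly the ~-saturated languages. Since ~ is a congruence of the
   free monoid, these form a complete atomic Boolean algebra (atoms: the ~-classes) closed under
   derivatives; every L(x,c) is saturated. Conversely, the class of u is the intersection, over
   all x and w, of the right quotient L(x,c)w^{-1} or of its complement, depending on whether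
   uw \<in> L(x,c); so any preformation containing the L(x,c) contains all classes, hence all
   saturated languages. *)

lemma preformation_saturated:
  assumes equiv: "equiv UNIV R"
    and cong_left: "\<And>u v z. (u, v) \<in> R \<Longrightarrow> (z @ u, z @ v) \<in> R"
    and cong_right: "\<And>u v z. (u, v) \<in> R \<Longrightarrow> (u @ z, v @ z) \<in> R"
  shows "preformation {S. R `` S \<subseteq> S}"
  unfolding preformation_def
proof (intro conjI allI ballI impI)
  fix A assume A: "A \<in> {S. R `` S \<subseteq> S}" "A \<noteq> {}"
  then obtain u where "u \<in> A" by blast
  show "\<exists>B\<in>{S. R `` S \<subseteq> S}. B \<noteq> {} \<and> B \<subseteq> A \<and>
          (\<forall>C\<in>{S. R `` S \<subseteq> S}. C \<subseteq> B \<longrightarrow> C = {} \<or> C = B)"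
  proof (intro bexI conjI ballI impI)
    show "R `` {u} \<in> {S. R `` S \<subseteq> S}"
      using equiv by (auto elim: equivE dest: transD)
    show "R `` {u} \<noteq> {}"
      using equiv by (auto elim: equivE dest: refl_onD)
    show "R `` {u} \<subseteq> A"
      using A \<open>u \<in> A\<close> by blast
    fix C assume C: "C \<in> {S. R `` S \<subseteq> S}" "C \<subseteq> R `` {u}"
    show "C = {} \<or> C = R `` {u}"
    proof (cases "C = {}")
      case False
      then obtain v where "v \<in> C" by blast
      with C have "R `` {u} = R `` {v}"
        using equiv by (metis Image_singleton_iff equiv_class_eq subsetD)
      with C \<open>v \<in> C\<close> show ?thesis by auto
    qed simp
  qed
next
  fix A assume "A \<in> {S. R `` S \<subseteq> S}"
  with equiv show "- A \<in> {S. R `` S \<subseteq> S}"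
    unfolding equiv_def sym_def by blast
next
  fix a A assume A: "A \<in> {S. R `` S \<subseteq> S}"
  show "lderiv a A \<in> {S. R `` S \<subseteq> S}"
    using A cong_left[where z = "[a]"] by (fastforce simp: lderiv_def)
  show "rderiv a A \<in> {S. R `` S \<subseteq> S}"
    using A cong_right[where z = "[a]"] by (fastforce simp: rderiv_def)
qed blast+

lemma preformation_right_quotient:
  assumes "preformation P" "A \<in> P"
  shows "{v. v @ w \<in> A} \<in> P"
  using assms(2)
proof (induction w arbitrary: A rule: rev_induct)
  case (snoc a w)
  have "rderiv a A \<in> P"
    using assms(1) snoc.prems by (simp add: preformation_def)
  then have "{v. v @ w \<in> rderiv a A} \<in> P" by (rule snoc.IH)
  then show ?case by (simp add: rderiv_def)
qed simp

lemma saturated_in_preformation: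
  assumes "refl R" "preformation P" "\<And>u. R `` {u} \<in> P" "R `` S \<subseteq> S"
  shows "S \<in> P"
proof -
  have "S = (\<Union>u\<in>S. R `` {u})"
    using assms(1,4) by (auto dest: refl_onD)
  moreover have "(\<Union>u\<in>S. R `` {u}) \<in> P"
    using assms(2,3) unfolding preformation_def by (metis image_subsetI)
  ultimately show ?thesis by simp
qed

definition accept_equiv :: "('x \<Rightarrow> 'a \<Rightarrow> 'x) \<Rightarrow> 'x set \<Rightarrow> ('a list \<times> 'a list) set" where
  "accept_equiv d c = {(u, v). \<forall>x w. deltaw d x (u @ w) \<in> c \<longleftrightarrow> deltaw d x (v @ w) \<in> c}"

lemma deltaw_append: "deltaw d x (u @ v) = deltaw d (deltaw d x u) v"
  by (induction u arbitrary: x) auto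

lemma hatdelta_conv_deltaw: "hatdelta d U w = {x. deltaw d x (rev w) \<in> U}"
  by (induction w arbitrary: U) (auto simp: hatdelta1_def deltaw_append)

lemma equiv_accept_equiv: "equiv UNIV (accept_equiv d c)"
  by (rule equivI) (auto simp: accept_equiv_def refl_on_def sym_def trans_def)

lemma accept_equiv_append:
  assumes "(u, v) \<in> accept_equiv d c"
  shows "(z @ u, z @ v) \<in> accept_equiv d c" and "(u @ z, v @ z) \<in> accept_equiv d c"
  using assms by (auto simp: accept_equiv_def deltaw_append[of _ _ z])

lemma approxrel_eq_inv_image: "approxrel d c = inv_image (accept_equiv d c) rev"
proof -
  have "(u, v) \<in> approxrel d c \<longleftrightarrow>
      (\<forall>w. {x. deltaw d x (rev u @ rev w) \<in> c} = {x. deltaw d x (rev v @ rev w) \<in> c})" for u v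
    by (auto simp: approxrel_def gen_def hatdelta_conv_deltaw deltaw_append)
  also have "\<dots> u v \<longleftrightarrow> (\<forall>w x. deltaw d x (rev u @ w) \<in> c \<longleftrightarrow> deltaw d x (rev v @ w) \<in> c)"
    for u v
    by (simp add: set_eq_iff) (metis rev_rev_ident)
  finally show ?thesis
    by (auto simp: accept_equiv_def inv_image_def)
qed

lemma equiv_approxrel: "equiv UNIV (approxrel d c)"
  unfolding approxrel_eq_inv_image
proof (rule equivI)
  show "refl (inv_image (accept_equiv d c) rev)"
    by (simp add: refl_on_def inv_image_def accept_equiv_def)
  show "sym (inv_image (accept_equiv d c) rev)" "trans (inv_image (accept_equiv d c) rev)"
    using equiv_accept_equiv by (auto intro: sym_inv_image trans_inv_image elim: equivE)
qed simp

lemma cls_eq_iff: "cls d c u = cls d c v \<longleftrightarrow> (rev u, rev v) \<in> accept_equiv d c"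
  unfolding cls_def eq_equiv_class_iff[OF equiv_approxrel UNIV_I UNIV_I]
  by (simp add: approxrel_eq_inv_image)

lemma Lx_saturated: "accept_equiv d c `` Lx d c x \<subseteq> Lx d c x"
proof
  fix v assume "v \<in> accept_equiv d c `` Lx d c x"
  then obtain u where "u \<in> Lx d c x" "\<forall>y w. deltaw d y (u @ w) \<in> c \<longleftrightarrow> deltaw d y (v @ w) \<in> c"
    by (auto simp: accept_equiv_def)
  then show "v \<in> Lx d c x"
    by (simp add: Lx_def) (metis append_Nil2)
qed

lemma accept_equiv_class_in_preformation:
  assumes P: "preformation P" "range (Lx d c) \<subseteq> P"
  shows "accept_equiv d c `` {u} \<in> P"
proof -
  define Q where "Q x w = {v. v @ w \<in> Lx d c x}" for x w
  define F where "F = (\<lambda>(x, w). if u \<in> Q x w then Q x w else - Q x w)"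
  have "Q x w \<in> P" for x w
    unfolding Q_def using P by (auto intro: preformation_right_quotient)
  then have "range F \<subseteq> P"
    using P(1) by (auto simp: F_def preformation_def)
  then have "\<Inter> (range F) \<in> P"
    using P(1) by (simp add: preformation_def)
  moreover have "accept_equiv d c `` {u} = \<Inter> (range F)"
  proof (rule set_eqI)
    fix v
    have "v \<in> \<Inter> (range F) \<longleftrightarrow> (\<forall>x w. v \<in> F (x, w))"
      by auto
    also have "\<dots> \<longleftrightarrow> (\<forall>x w. u \<in> Q x w \<longleftrightarrow> v \<in> Q x w)"
      by (simp add: F_def) blast
    finally show "v \<in> accept_equiv d c `` {u} \<longleftrightarrow> v \<in> \<Inter> (range F)"
      by (simp add: accept_equiv_def Q_def Lx_def)
  qed
  ultimately show ?thesis by simp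
qed

lemma Lmu_conv: "Lmu d c UU = {u. cls d c (rev u) \<in> UU}"
proof -
  have "cls d c [] \<in> hatsigma d c UU u \<longleftrightarrow> cls d c (rev u) \<in> UU" for u
  proof
    assume "cls d c [] \<in> hatsigma d c UU u"
    then obtain w where w: "cls d c [] = cls d c w" "cls d c (w @ rev u) \<in> UU"
      by (auto simp: hatsigma_def)
    from w(1)[symmetric] have "(rev w, []) \<in> accept_equiv d c"
      by (simp add: cls_eq_iff)
    then have "(u @ rev w, u) \<in> accept_equiv d c"
      using accept_equiv_append(1)[of "rev w" "[]" d c u] by simp
    then have "cls d c (w @ rev u) = cls d c (rev u)"
      by (simp add: cls_eq_iff)
    with w(2) show "cls d c (rev u) \<in> UU" by simp
  qed (auto simp: hatsigma_def)
  then show ?thesis by (auto simp: Lmu_def)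
qed

lemma inj_on_Lmu: "inj_on (Lmu d c) (Pow (quot d c))"
proof (rule inj_onI)
  have "K \<in> U'" if "K \<in> U" "U \<subseteq> quot d c" "Lmu d c U = Lmu d c U'" for K U U'
  proof -
    from that obtain w where "K = cls d c w"
      by (auto simp: quot_def cls_def elim!: quotientE)
    with that(1) have "rev w \<in> Lmu d c U"
      by (simp add: Lmu_conv)
    with that(3) have "rev w \<in> Lmu d c U'"
      by simp
    with \<open>K = cls d c w\<close> show ?thesis
      by (simp add: Lmu_conv)
  qed
  then show "U = U'" if "U \<in> Pow (quot d c)" "U' \<in> Pow (quot d c)" "Lmu d c U = Lmu d c U'"
    for U U'
    using that by (metis Pow_iff subsetI subset_antisym)
qed

lemma image_Lmu: "Lmu d c ` Pow (quot d c) = {S. accept_equiv d c `` S \<subseteq> S}"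
proof (intro equalityI subsetI)
  fix S assume "S \<in> Lmu d c ` Pow (quot d c)"
  then obtain UU where S: "S = Lmu d c UU" by blast
  have "v \<in> S" if "(u, v) \<in> accept_equiv d c" "u \<in> S" for u v
  proof -
    from that(1) have "cls d c (rev u) = cls d c (rev v)"
      by (simp add: cls_eq_iff)
    with that(2) show ?thesis
      by (simp add: S Lmu_conv)
  qed
  then show "S \<in> {S. accept_equiv d c `` S \<subseteq> S}"
    by blast
next
  fix S assume S: "S \<in> {S. accept_equiv d c `` S \<subseteq> S}"
  let ?UU = "{cls d c (rev u) | u. u \<in> S}"
  have "?UU \<subseteq> quot d c"
    by (auto simp: quot_def cls_def quotientI)
  moreover have "u \<in> Lmu d c ?UU \<longleftrightarrow> u \<in> S" for u
  proof -
    have "u \<in> Lmu d c ?UU \<longleftrightarrow> (\<exists>u'\<in>S. cls d c (rev u') = cls d c (rev u))"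
      by (auto simp: Lmu_conv)
    also have "\<dots> \<longleftrightarrow> (\<exists>u'\<in>S. (u', u) \<in> accept_equiv d c)"
      by (simp add: cls_eq_iff)
    also have "\<dots> \<longleftrightarrow> u \<in> S"
      using S by (auto simp: accept_equiv_def)
    finally show ?thesis .
  qed
  ultimately show "S \<in> Lmu d c ` Pow (quot d c)"
    by blast
qed

theorem mainTheorem8:
  fixes d :: "'x \<Rightarrow> 'a::finite \<Rightarrow> 'x" and c :: "'x set"
  shows "inj_on (Lmu d c) (Pow (quot d c)) \<and>
         preformation (Lmu d c ` Pow (quot d c)) \<and>
         range (Lx d c) \<subseteq> Lmu d c ` Pow (quot d c) \<and>
         (\<forall>P. preformation P \<and> range (Lx d c) \<subseteq> P \<longrightarrow> Lmu d c ` Pow (quot d c) \<subseteq> P)"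
proof (intro conjI allI impI)
  show "inj_on (Lmu d c) (Pow (quot d c))"
    by (rule inj_on_Lmu)
  show "preformation (Lmu d c ` Pow (quot d c))"
    unfolding image_Lmu
    by (rule preformation_saturated[OF equiv_accept_equiv accept_equiv_append])
  show "range (Lx d c) \<subseteq> Lmu d c ` Pow (quot d c)"
    unfolding image_Lmu by (simp add: image_subset_iff Lx_saturated)
  fix P assume P: "preformation P \<and> range (Lx d c) \<subseteq> P"
  have "refl (accept_equiv d c)"
    using equiv_accept_equiv by (rule equivE)
  moreover have "accept_equiv d c `` {u} \<in> P" for u
    using P by (simp add: accept_equiv_class_in_preformation)
  ultimately show "Lmu d c ` Pow (quot d c) \<subseteq> P"
    unfolding image_Lmu using P by (auto intro: saturated_in_preformation)
qed

end
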